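(* Let $p$ be a prime, let $\mathcal{F}$ be a saturated fusion system on a finite $p$-group $S$, and let $\Omega$ be a finite $(S,S)$-biset which is $\mathcal{F}$-stable and $\mathcal{F}$-generated and which contains the $(S,S)$-biset $S$ (with $S$ acting on itself by left and right multiplication) as a sub-biset. Consider the square matrix \[ \bigl( |P\backslash \Omega /Q| \bigr)_{P,Q}, \] whose rows and columns are indexed by the $\mathcal{F}$-conjugacy classes of subgroups of $S$ and whose $(P,Q)$-entry is the number of $(P,Q)$-orbits of $\Omega$. Then the rank of this matrix (over $\mathbb{Q}$) is equal to the number of $\mathcal{F}$-conjugacy classes of cyclic subgroups of $S$.
   Context: A saturated fusion system $\mathcal{F}$ on $S$ is a category whose objects are the subgroups of $S$ and whose morphisms are injective homomorphisms, containing conjugations by elements of $S$, closed under restriction and inverses, and satisfying the Broto–Levi–Oliver saturation axioms; $P,P'\leq S$ are $\mathcal{F}$-conjugate if there is an isomorphism $P\to P'$ in $\mathcal{F}$. An $(S,S)$-biset is a finite set with commuting left and right $S$-actions, viewed as a left $S\times S$-set via $(s,t)\cdot x=sxt^{-1}$; the $(P,Q)$-orbits are the orbits of $P\times Q$. A left $S$-set $X$ is $\mathcal{F}$-stable if for every $P\leq S$ and every morphism $\varphi\colon P\to S$ in $\mathcal{F}$, the $P$-sets obtained by restricting the $S$-action along the inclusion and along $\varphi$ are isomorphic; an $(S,S)$-biset is $\mathcal{F}$-stable if it is $(\mathcal{F}\times\mathcal{F})$-stable as a left $S\times S$-set. An $(S,S)$-biset is $\mathcal{F}$-generated if all isotropy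 subgroups of the left $S\times S$-action have the form $\Delta(P,\varphi)=\{(u,\varphi(u))\mid u\in P\}$ with $P\leq S$ and $\varphi\colon P\to S$ a morphism in $\mathcal{F}$. *)

theory Defs
  imports "HOL-Algebra.Algebra"
begin

text \<open>A fusion system F on S is encoded as a set of pairs (P, phi) where P is a subgroup
of S and phi is an injective homomorphism P to S (extensional on P). A morphism P to Q in
the category sense is such a phi with phi ` P contained in Q.\<close>

definition Fmor :: "('a set \<times> ('a \<Rightarrow> 'a)) set \<Rightarrow> 'a set \<Rightarrow> ('a \<Rightarrow> 'a) \<Rightarrow> bool" where
  "Fmor F P \<phi> \<longleftrightarrow> (P, restrict \<phi> P) \<in> F"

definition conjg :: "('a, 'b) monoid_scheme \<Rightarrow> 'a \<Rightarrow> 'a \<Rightarrow> 'a" where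
  "conjg S g x = g \<otimes>\<^bsub>S\<^esub> x \<otimes>\<^bsub>S\<^esub> inv\<^bsub>S\<^esub> g"

definition fusion_system :: "('a, 'b) monoid_scheme \<Rightarrow> ('a set \<times> ('a \<Rightarrow> 'a)) set \<Rightarrow> bool" where
  "fusion_system S F \<longleftrightarrow>
     (\<forall>(P, \<phi>) \<in> F. subgroup P S \<and> \<phi> \<in> extensional P \<and>
         \<phi> \<in> hom (S\<lparr>carrier := P\<rparr>) S \<and> inj_on \<phi> P)
   \<and> (\<forall>P g. subgroup P S \<and> g \<in> carrier S \<longrightarrow> Fmor F P (conjg S g))
   \<and> (\<forall>P Q \<phi>. Fmor F P \<phi> \<and> subgroup Q S \<and> Q \<subseteq> P \<longrightarrow> Fmor F Q \<phi>)
   \<and> (\<forall>P \<phi>. Fmor F P \<phi> \<longrightarrow> Fmor F (\<phi> ` P) (inv_into P \<phi>))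
   \<and> (\<forall>P \<phi> \<psi>. Fmor F P \<phi> \<and> Fmor F (\<phi> ` P) \<psi> \<longrightarrow> Fmor F P (\<psi> \<circ> \<phi>))"

definition F_conj :: "('a set \<times> ('a \<Rightarrow> 'a)) set \<Rightarrow> 'a set \<Rightarrow> 'a set \<Rightarrow> bool" where
  "F_conj F P Q \<longleftrightarrow> (\<exists>\<phi>. Fmor F P \<phi> \<and> \<phi> ` P = Q)"

definition normalizer_in :: "('a, 'b) monoid_scheme \<Rightarrow> 'a set \<Rightarrow> 'a set" where
  "normalizer_in S P = {g \<in> carrier S. conjg S g ` P = P}"

definition centralizer_in :: "('a, 'b) monoid_scheme \<Rightarrow> 'a set \<Rightarrow> 'a set" where
  "centralizer_in S P = {g \<in> carrier S. \<forall>x \<in> P. conjg S g x = x}"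

definition fully_normalized where
  "fully_normalized S F P \<longleftrightarrow>
     (\<forall>Q. F_conj F P Q \<longrightarrow> card (normalizer_in S Q) \<le> card (normalizer_in S P))"

definition fully_centralized where
  "fully_centralized S F P \<longleftrightarrow>
     (\<forall>Q. F_conj F P Q \<longrightarrow> card (centralizer_in S Q) \<le> card (centralizer_in S P))"

definition Aut_F :: "('a set \<times> ('a \<Rightarrow> 'a)) set \<Rightarrow> 'a set \<Rightarrow> ('a \<Rightarrow> 'a) set" where
  "Aut_F F P = {restrict \<phi> P | \<phi>. Fmor F P \<phi> \<and> \<phi> ` P = P}"

definition Aut_S :: "('a, 'b) monoid_scheme \<Rightarrow> 'a set \<Rightarrow> ('a \<Rightarrow> 'a) set" where
  "Aut_S S P = {restrict (conjg S g) P | g. g \<in> normalizer_in S P}"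

text \<open>N_phi from the extension axiom: g in N_S(P) such that phi c_g phi^-1 is in Aut_S(phi(P)).\<close>
definition N_phi :: "('a, 'b) monoid_scheme \<Rightarrow> 'a set \<Rightarrow> ('a \<Rightarrow> 'a) \<Rightarrow> 'a set" where
  "N_phi S P \<phi> = {g \<in> normalizer_in S P. \<exists>h \<in> normalizer_in S (\<phi> ` P).
       \<forall>y \<in> \<phi> ` P. \<phi> (conjg S g (inv_into P \<phi> y)) = conjg S h y}"

text \<open>Saturation axioms of Broto--Levi--Oliver. The Sylow condition says that
Aut_S(P) is a Sylow p-subgroup of Aut_F(P): its order is the full p-part of the order.\<close>
definition saturated_fusion_system :: "nat \<Rightarrow> ('a, 'b) monoid_scheme \<Rightarrow> ('a set \<times> ('a \<Rightarrow> 'a)) set \<Rightarrow> bool" where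
  "saturated_fusion_system p S F \<longleftrightarrow> fusion_system S F
   \<and> (\<forall>P. subgroup P S \<and> fully_normalized S F P \<longrightarrow>
         fully_centralized S F P \<and>
         (\<exists>k. card (Aut_S S P) = p ^ k \<and> \<not> p ^ Suc k dvd card (Aut_F F P)))
   \<and> (\<forall>P \<phi>. Fmor F P \<phi> \<and> fully_centralized S F (\<phi> ` P) \<longrightarrow>
         (\<exists>\<psi>. Fmor F (N_phi S P \<phi>) \<psi> \<and> (\<forall>x \<in> P. \<psi> x = \<phi> x)))"

definition biset :: "('a, 'b) monoid_scheme \<Rightarrow> 'c set \<Rightarrow> ('a \<Rightarrow> 'c \<Rightarrow> 'c) \<Rightarrow> ('c \<Rightarrow> 'a \<Rightarrow> 'c) \<Rightarrow> bool" where
  "biset S \<Omega> l r \<longleftrightarrow>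
     (\<forall>s \<in> carrier S. \<forall>x \<in> \<Omega>. l s x \<in> \<Omega> \<and> r x s \<in> \<Omega>)
   \<and> (\<forall>x \<in> \<Omega>. l \<one>\<^bsub>S\<^esub> x = x \<and> r x \<one>\<^bsub>S\<^esub> = x)
   \<and> (\<forall>s \<in> carrier S. \<forall>t \<in> carrier S. \<forall>x \<in> \<Omega>.
        l (s \<otimes>\<^bsub>S\<^esub> t) x = l s (l t x) \<and> r x (s \<otimes>\<^bsub>S\<^esub> t) = r (r x s) t
        \<and> l s (r x t) = r (l s x) t)"

definition act2 :: "('a, 'b) monoid_scheme \<Rightarrow> ('a \<Rightarrow> 'c \<Rightarrow> 'c) \<Rightarrow> ('c \<Rightarrow> 'a \<Rightarrow> 'c) \<Rightarrow> 'a \<times> 'a \<Rightarrow> 'c \<Rightarrow> 'c" where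
  "act2 S l r st x = l (fst st) (r x (inv\<^bsub>S\<^esub> (snd st)))"

text \<open>(F x F)-stability: for every subgroup R of S x S and every morphism of F x F out of R,
i.e. a restriction to R of phi1 x phi2 with phi1, phi2 in F defined on the projections of R,
the two R-sets obtained by restriction are isomorphic.\<close>
definition biset_stable where
  "biset_stable S F \<Omega> l r \<longleftrightarrow>
     (\<forall>R \<phi>1 \<phi>2. subgroup R (S \<times>\<times> S) \<and> Fmor F (fst ` R) \<phi>1 \<and> Fmor F (snd ` R) \<phi>2 \<longrightarrow>
        (\<exists>f. bij_betw f \<Omega> \<Omega> \<and>
             (\<forall>st \<in> R. \<forall>x \<in> \<Omega>. f (act2 S l r st x) = act2 S l r (\<phi>1 (fst st), \<phi>2 (snd st)) (f x))))"

definition isotropy where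
  "isotropy S l r x = {st \<in> carrier S \<times> carrier S. act2 S l r st x = x}"

definition biset_generated where
  "biset_generated S F \<Omega> l r \<longleftrightarrow>
     (\<forall>x \<in> \<Omega>. \<exists>P \<phi>. Fmor F P \<phi> \<and> isotropy S l r x = {(u, \<phi> u) | u. u \<in> P})"

definition contains_regular_biset where
  "contains_regular_biset S \<Omega> l r \<longleftrightarrow>
     (\<exists>\<iota>. inj_on \<iota> (carrier S) \<and> \<iota> ` carrier S \<subseteq> \<Omega> \<and>
        (\<forall>s \<in> carrier S. \<forall>u \<in> carrier S. \<forall>t \<in> carrier S.
            \<iota> (s \<otimes>\<^bsub>S\<^esub> u \<otimes>\<^bsub>S\<^esub> t) = l s (r (\<iota> u) t)))"

definition num_orbits where
  "num_orbits l r \<Omega> P Q = card {{l s (r x t) | s t. s \<in> P \<and> t \<in> Q} | x. x \<in> \<Omega>}"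

definition F_class where
  "F_class F P = {Q. F_conj F P Q}"

definition F_classes where
  "F_classes S F = {F_class F P | P. subgroup P S}"

definition cyclic_subgroup where
  "cyclic_subgroup S P \<longleftrightarrow> (\<exists>g \<in> carrier S. P = generate S {g})"

definition F_cyclic_classes where
  "F_cyclic_classes S F = {F_class F P | P. subgroup P S \<and> cyclic_subgroup S P}"

definition orbit_matrix where
  "orbit_matrix l r \<Omega> A B = rat_of_nat (num_orbits l r \<Omega> (SOME P. P \<in> A) (SOME Q. Q \<in> B))"

definition rows_lin_indep :: "'i set \<Rightarrow> 'j set \<Rightarrow> ('i \<Rightarrow> 'j \<Rightarrow> rat) \<Rightarrow> bool" where
  "rows_lin_indep R J M \<longleftrightarrow>
     (\<forall>c. (\<forall>j \<in> J. (\<Sum>i \<in> R. c i * M i j) = 0) \<longrightarrow> (\<forall>i \<in> R. c i = 0))"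

definition mat_rank :: "'i set \<Rightarrow> 'j set \<Rightarrow> ('i \<Rightarrow> 'j \<Rightarrow> rat) \<Rightarrow> nat" where
  "mat_rank I J M = Max {card R | R. R \<subseteq> I \<and> rows_lin_indep R J M}"

end

theory Submission
  imports Defs "HOL-Number_Theory.Cong" "HOL-Library.Indicator_Function"
begin

text \<open>
  Write Fix(a, b) for the set of points of \<Omega> fixed by (a, b) \<in> S \<times> S and consider the bilinear
  form \<langle>u, v\<rangle> = \<Sum>a b. u a v b |Fix(a, b)| on functions S \<rightarrow> \<rat>. By Burnside's lemma the
  (P, Q)-entry of the matrix is \<langle>1_P, 1_Q\<rangle> / (|P| |Q|). Stability makes |Fix(a, b)| invariant under
  F-morphisms applied to a or b, and fixed points of (a, b) and (a^k, b^k) agree for k prime to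
  |S|. In a p-group, generators of F-conjugate cyclic subgroups are related by such maps, so
  against a function invariant under coprime powers the form sees the other argument only
  through its sums over the F-classes of cyclic subgroups. Hence the matrix factors through
  the cyclic classes and its rank is at most their number.

  Conversely, the rows of the cyclic classes are independent. The number of elements of a
  cyclic class c inside a representative of a cyclic class c' is triangular with respect to
  the order of the representative, so a vanishing combination of these rows gives, by
  triangularity, a function u with \<langle>u, v\<rangle> = 0 for all v. Its average w over the cyclic classes satisfies \<langle>w, w\<rangle> = 0.
  As \<Omega> is F-generated, \<langle>w, w\<rangle> is a sum over the points x of \<Omega> of
  \<Sum>u\<in>P. w u w (\<phi> u) = \<Sum>u\<in>P. (w u)^2 \<ge> 0, where the isotropy group of x is the graph of \<phi> : P \<rightarrow> S,
  and the copy of S in \<Omega> contributes \<Sum>a. (w a)^2. So w = 0, and triangularity again shows that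
  the combination is trivial.
\<close>

section \<open>Linear algebra\<close>

lemma nontrivial_relation_exists:
  fixes \<alpha> :: "'i \<Rightarrow> 'c \<Rightarrow> 'a::field"
  assumes "finite C" and "finite R" and "card C < card R"
  shows "\<exists>y. (\<exists>i\<in>R. y i \<noteq> 0) \<and> (\<forall>c\<in>C. (\<Sum>i\<in>R. y i * \<alpha> i c) = 0)"
  using assms
proof (induction C arbitrary: R \<alpha> rule: finite_induct)
  case empty
  then obtain i where "i \<in> R" by fastforce
  then show ?case by (intro exI[of _ "\<lambda>_. 1"]) auto
next
  case (insert c C)
  show ?case
  proof (cases "\<forall>i\<in>R. \<alpha> i c = 0")
    case True
    have "card C < card R"
      using insert by simp
    then obtain y where "\<exists>i\<in>R. y i \<noteq> 0" "\<forall>d\<in>C. (\<Sum>i\<in>R. y i * \<alpha> i d) = 0"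
      using insert.IH[of R \<alpha>] insert.prems(1) by blast
    with True show ?thesis by auto
  next
    case False
    then obtain i0 where i0: "i0 \<in> R" "\<alpha> i0 c \<noteq> 0" by blast
    define R' where "R' = R - {i0}"
    txt \<open>Gaussian elimination: clear the coordinate c using the row i0.\<close>
    define \<alpha>' where "\<alpha>' i d = \<alpha> i d - \<alpha> i c / \<alpha> i0 c * \<alpha> i0 d" for i d
    have "card C < card R'"
      using insert i0 by (simp add: R'_def)
    then obtain y' where y': "\<exists>i\<in>R'. y' i \<noteq> 0" "\<forall>d\<in>C. (\<Sum>i\<in>R'. y' i * \<alpha>' i d) = 0"
      using insert.IH[of R' \<alpha>'] insert.prems(1) by (auto simp: R'_def)
    define y where "y i = (if i = i0 then - (\<Sum>j\<in>R'. y' j * \<alpha> j c) / \<alpha> i0 c else y' i)" for i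
    have "(\<Sum>i\<in>R. y i * \<alpha> i d) = y i0 * \<alpha> i0 d + (\<Sum>i\<in>R'. y' i * \<alpha> i d)" for d
    proof -
      have "(\<Sum>i\<in>R. y i * \<alpha> i d) = y i0 * \<alpha> i0 d + (\<Sum>i\<in>R'. y i * \<alpha> i d)"
        using i0 insert.prems(1) by (simp add: R'_def sum.remove)
      also have "(\<Sum>i\<in>R'. y i * \<alpha> i d) = (\<Sum>i\<in>R'. y' i * \<alpha> i d)"
        by (rule sum.cong) (auto simp: y_def R'_def)
      finally show ?thesis .
    qed
    also have "y i0 * \<alpha> i0 d + (\<Sum>i\<in>R'. y' i * \<alpha> i d) = (\<Sum>i\<in>R'. y' i * \<alpha>' i d)" for d
      by (simp add: y_def \<alpha>'_def algebra_simps sum_subtractf sum_distrib_left sum_divide_distrib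
          sum_distrib_right)
    finally have reduced: "(\<Sum>i\<in>R. y i * \<alpha> i d) = (\<Sum>i\<in>R'. y' i * \<alpha>' i d)" for d .
    have "\<alpha>' i c = 0" for i
      using i0(2) by (simp add: \<alpha>'_def)
    then have "\<forall>d\<in>insert c C. (\<Sum>i\<in>R. y i * \<alpha> i d) = 0"
      using y'(2) by (simp add: reduced)
    moreover have "\<exists>i\<in>R. y i \<noteq> 0"
      using y'(1) by (auto simp: y_def R'_def)
    ultimately show ?thesis by blast
  qed
qed

lemma mat_rank_le_factorization:
  fixes M :: "'i \<Rightarrow> 'j \<Rightarrow> rat"
  assumes "finite I" and "finite C"
    and M: "\<And>i j. i \<in> I \<Longrightarrow> j \<in> J \<Longrightarrow> M i j = (\<Sum>c\<in>C. \<alpha> i c * \<beta> c j)"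
  shows "mat_rank I J M \<le> card C"
proof -
  have "card R \<le> card C" if R: "R \<subseteq> I" and indep: "rows_lin_indep R J M" for R
  proof (rule ccontr)
    assume "\<not> card R \<le> card C"
    moreover have "finite R" using R \<open>finite I\<close> by (rule finite_subset)
    ultimately obtain y where y: "\<exists>i\<in>R. y i \<noteq> 0" "\<forall>c\<in>C. (\<Sum>i\<in>R. y i * \<alpha> i c) = 0"
      using nontrivial_relation_exists[OF \<open>finite C\<close>, of R \<alpha>] by auto
    have "(\<Sum>i\<in>R. y i * M i j) = 0" if "j \<in> J" for j
    proof -
      have "(\<Sum>i\<in>R. y i * M i j) = (\<Sum>i\<in>R. \<Sum>c\<in>C. y i * \<alpha> i c * \<beta> c j)"
        using R M[OF _ \<open>j \<in> J\<close>] by (auto simp: sum_distrib_left mult.assoc intro!: sum.cong)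
      also have "\<dots> = (\<Sum>c\<in>C. (\<Sum>i\<in>R. y i * \<alpha> i c) * \<beta> c j)"
        by (subst sum.swap) (simp add: sum_distrib_right)
      finally show ?thesis using y(2) by simp
    qed
    with indep y(1) show False unfolding rows_lin_indep_def by blast
  qed
  moreover have "rows_lin_indep {} J M" by (simp add: rows_lin_indep_def)
  moreover have "finite {card R | R. R \<subseteq> I \<and> rows_lin_indep R J M}"
    using \<open>finite I\<close> by simp
  ultimately show ?thesis
    unfolding mat_rank_def by (subst Max_le_iff) auto
qed

lemma card_le_mat_rank:
  assumes "finite I" and "R \<subseteq> I" and "rows_lin_indep R J M"
  shows "card R \<le> mat_rank I J M"
  unfolding mat_rank_def using assms by (intro Max_ge) auto

lemma triangular_system_solution_eq_0:
  fixes n :: "'c \<Rightarrow> 'c \<Rightarrow> 'a::idom" and \<kappa> :: "'c \<Rightarrow> 'k::linorder"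
  assumes "finite C"
    and triangular: "\<And>c c'. c \<in> C \<Longrightarrow> c' \<in> C \<Longrightarrow> n c c' \<noteq> 0 \<Longrightarrow> c' = c \<or> \<kappa> c' < \<kappa> c"
    and diagonal: "\<And>c. c \<in> C \<Longrightarrow> n c c \<noteq> 0"
    and solution: "\<And>c. c \<in> C \<Longrightarrow> (\<Sum>c'\<in>C. n c c' * y c') = 0"
  shows "\<forall>c\<in>C. y c = 0"
proof (rule ccontr)
  define D where "D = {c\<in>C. y c \<noteq> 0}"
  assume "\<not> (\<forall>c\<in>C. y c = 0)"
  then have "D \<noteq> {}" and "finite D" using \<open>finite C\<close> by (auto simp: D_def)
  then obtain c0 where c0: "c0 \<in> D" and min: "\<And>c. c \<in> D \<Longrightarrow> \<kappa> c0 \<le> \<kappa> c"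
    using ex_min_if_finite[of "\<kappa> ` D"] by (auto simp: not_less)
  have "c0 \<in> C" using c0 by (simp add: D_def)
  have "n c0 c * y c = 0" if "c \<in> C - {c0}" for c
    using that triangular[OF \<open>c0 \<in> C\<close>, of c] min[of c] by (force simp: D_def)
  then have "(\<Sum>c\<in>C - {c0}. n c0 c * y c) = 0"
    by (rule sum.neutral[OF ballI])
  then have "(\<Sum>c\<in>C. n c0 c * y c) = n c0 c0 * y c0"
    using \<open>c0 \<in> C\<close> \<open>finite C\<close> by (simp add: sum.remove)
  then show False
    using solution[OF \<open>c0 \<in> C\<close>] diagonal[OF \<open>c0 \<in> C\<close>] c0 by (simp add: D_def)
qed

section \<open>Powers coprime to the group order\<close>

context group
begin

lemma subgroup_nat_pow_closed: "subgroup H G \<Longrightarrow> a \<in> H \<Longrightarrow> a [^] (n::nat) \<in> H"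
  by (induction n) (auto intro: subgroup.m_closed subgroup.one_closed)

lemma nat_pow_mod_order:
  assumes "finite (carrier G)" and "a \<in> carrier G"
  shows "a [^] (m mod order G) = a [^] (m::nat)"
proof -
  have "a [^] m = (a [^] order G) [^] (m div order G) \<otimes> a [^] (m mod order G)"
    using assms by (metis nat_pow_mult nat_pow_pow div_mult_mod_eq mult.commute)
  then show ?thesis using assms by (simp add: pow_order_eq_1)
qed

lemma coprime_nat_pow_inverse:
  assumes "finite (carrier G)" and "coprime k (order G)"
  obtains k' :: nat where "\<And>a. a \<in> carrier G \<Longrightarrow> (a [^] (k::nat)) [^] k' = a"
proof -
  obtain k' :: nat where "[k * k' = 1] (mod order G)"
    using cong_solve_coprime_nat[OF assms(2)] by auto
  then have "(a [^] k) [^] k' = a" if "a \<in> carrier G" for a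
    using nat_pow_mod_order[OF assms(1) that, of "k * k'"] nat_pow_mod_order[OF assms(1) that, of 1]
    by (simp add: that nat_pow_pow cong_def)
  then show ?thesis by (rule that)
qed

lemma subgroup_coprime_nat_pow_iff:
  assumes "finite (carrier G)" and "coprime k (order G)" and "subgroup H G" and "a \<in> carrier G"
  shows "a [^] (k::nat) \<in> H \<longleftrightarrow> a \<in> H"
proof
  obtain k' :: nat where "(a [^] k) [^] k' = a"
    using coprime_nat_pow_inverse[OF assms(1,2)] assms(4) by metis
  then show "a [^] k \<in> H \<Longrightarrow> a \<in> H"
    using subgroup_nat_pow_closed[OF assms(3)] by metis
qed (rule subgroup_nat_pow_closed[OF assms(3)])

lemma bij_betw_coprime_nat_pow:
  assumes "finite (carrier G)" and "coprime k (order G)" and "subgroup H G"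
  shows "bij_betw (\<lambda>a. a [^] (k::nat)) H H"
proof -
  obtain k' :: nat where k': "\<And>a. a \<in> carrier G \<Longrightarrow> (a [^] k) [^] k' = a"
    using coprime_nat_pow_inverse[OF assms(1,2)] by metis
  have "(a [^] k') [^] k = a" if "a \<in> carrier G" for a
    using k'[OF that] that by (simp add: nat_pow_pow mult.commute)
  then show ?thesis
    using k' assms(3) subgroup.subset[OF assms(3)]
    by (intro bij_betw_byWitness[where f'="\<lambda>a. a [^] k'"]) (auto intro: subgroup_nat_pow_closed)
qed

lemma generate_coprime_nat_pow:
  assumes "finite (carrier G)" and "coprime k (order G)" and "a \<in> carrier G"
  shows "generate G {a [^] (k::nat)} = generate G {a}"
proof -
  have "a [^] k \<in> generate G {a}"
    using assms by (simp add: subgroup_coprime_nat_pow_iff generate_is_subgroup generate.incl)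
  moreover have "a \<in> generate G {a [^] k}"
    using assms subgroup_coprime_nat_pow_iff[OF assms(1,2) generate_is_subgroup, of "{a [^] k}" a]
    by (simp add: generate.incl)
  ultimately show ?thesis
    using assms by (intro equalityI generate_subgroup_incl generate_is_subgroup) auto
qed

lemma generate_eq_imp_coprime_nat_pow:
  assumes "Factorial_Ring.prime (p::nat)" and "finite (carrier G)" and "order G = p ^ n"
    and z: "z \<in> carrier G" and a: "a \<in> carrier G" and gen: "generate G {z} = generate G {a}"
  obtains k :: nat where "coprime k (order G)" and "a = z [^] k"
proof -
  have "a \<in> generate G {z}" and "z \<in> generate G {a}"
    using gen generate.incl[of a "{a}" G] generate.incl[of z "{z}" G] by auto
  then obtain j i :: nat where j: "a = z [^] j" and i: "z = a [^] i"
    unfolding generate_pow_on_finite_carrier[OF assms(2) z] generate_pow_on_finite_carrier[OF assms(2) a]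
    by blast
  show ?thesis
  proof (cases "p dvd j")
    case False
    then have "coprime j (order G)"
      using prime_imp_coprime[OF assms(1) False] assms(3)
      by (metis coprime_commute coprime_power_right_iff)
    with j that show ?thesis by blast
  next
    case True
    txt \<open>Then z = z^((j i)^n) = 1, and the exponent 1 works instead.\<close>
    have "z [^] (j * i) = (z [^] j) [^] i"
      using z by (simp add: nat_pow_pow)
    then have zji: "z [^] (j * i) = z"
      by (simp only: j[symmetric] i[symmetric])
    have iterate: "z [^] ((j * i) ^ m) = z" for m
    proof (induction m)
      case (Suc m)
      have "z [^] ((j * i) ^ Suc m) = (z [^] ((j * i) ^ m)) [^] (j * i)"
        using z by (simp only: nat_pow_pow power_Suc2)
      then show ?case using Suc zji by simp
    qed (use z in simp)
    have "p ^ n dvd (j * i) ^ n"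
      using True by (simp add: dvd_power_same)
    then obtain q where q: "(j * i) ^ n = p ^ n * q" ..
    have "z = (z [^] order G) [^] q"
      using iterate[of n] z by (simp add: q assms(3) nat_pow_pow)
    then have "z = \<one>"
      using z by (simp add: pow_order_eq_1)
    with j that[of 1] show ?thesis by simp
  qed
qed

end

section \<open>Fusion systems\<close>

locale fusion = group S for S :: "('a, 'b) monoid_scheme" (structure) +
  fixes F :: "('a set \<times> ('a \<Rightarrow> 'a)) set"
  assumes fusion_system: "fusion_system S F"
begin

lemma
  assumes "Fmor F P \<phi>"
  shows Fmor_subgroup: "subgroup P S"
    and Fmor_hom: "\<phi> \<in> hom (S\<lparr>carrier := P\<rparr>) S"
    and Fmor_inj_on: "inj_on \<phi> P"
proof -
  have "(P, restrict \<phi> P) \<in> F" using assms by (simp add: Fmor_def)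
  then have "subgroup P S" and hom: "restrict \<phi> P \<in> hom (S\<lparr>carrier := P\<rparr>) S"
    and "inj_on (restrict \<phi> P) P"
    using fusion_system unfolding fusion_system_def by blast+
  then show "subgroup P S" and "inj_on \<phi> P" by (simp_all add: inj_on_def)
  show "\<phi> \<in> hom (S\<lparr>carrier := P\<rparr>) S"
    using hom subgroup.m_closed[OF \<open>subgroup P S\<close>] by (simp add: hom_def Pi_def)
qed

lemma Fmor_closed: "Fmor F P \<phi> \<Longrightarrow> x \<in> P \<Longrightarrow> \<phi> x \<in> carrier S"
  using Fmor_hom by (fastforce simp: hom_def)

lemma Fmor_conjg: "subgroup P S \<Longrightarrow> g \<in> carrier S \<Longrightarrow> Fmor F P (conjg S g)"
  using fusion_system by (simp add: fusion_system_def)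

lemma Fmor_restrict: "Fmor F P \<phi> \<Longrightarrow> subgroup Q S \<Longrightarrow> Q \<subseteq> P \<Longrightarrow> Fmor F Q \<phi>"
  using fusion_system unfolding fusion_system_def by blast

lemma Fmor_inv_into: "Fmor F P \<phi> \<Longrightarrow> Fmor F (\<phi> ` P) (inv_into P \<phi>)"
  using fusion_system unfolding fusion_system_def by blast

lemma Fmor_comp: "Fmor F P \<phi> \<Longrightarrow> Fmor F (\<phi> ` P) \<psi> \<Longrightarrow> Fmor F P (\<psi> \<circ> \<phi>)"
  using fusion_system unfolding fusion_system_def by blast

lemma conjg_one [simp]: "x \<in> carrier S \<Longrightarrow> conjg S \<one> x = x"
  by (simp add: conjg_def)

lemma Fmor_id: "subgroup P S \<Longrightarrow> Fmor F P (conjg S \<one>)"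
  by (simp add: Fmor_conjg)

lemma F_conj_refl:
  assumes "subgroup P S"
  shows "F_conj F P P"
proof -
  have "conjg S \<one> ` P = id ` P"
    using subgroup.mem_carrier[OF assms] by (intro image_cong) simp_all
  then show ?thesis
    using Fmor_id[OF assms] by (auto simp: F_conj_def)
qed

lemma F_conj_sym: "F_conj F P Q \<Longrightarrow> F_conj F Q P"
  unfolding F_conj_def by (metis Fmor_inj_on Fmor_inv_into inv_into_image_cancel order_refl)

lemma F_conj_trans: "F_conj F P Q \<Longrightarrow> F_conj F Q R \<Longrightarrow> F_conj F P R"
  unfolding F_conj_def by (metis Fmor_comp image_comp)

lemma F_conj_subgroup: "F_conj F P Q \<Longrightarrow> subgroup Q S"
  using F_conj_sym by (auto simp: F_conj_def dest: Fmor_subgroup)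

lemma F_conj_card_eq: "F_conj F P Q \<Longrightarrow> card P = card Q"
  unfolding F_conj_def by (metis Fmor_inj_on card_image)

lemma F_class_eq: "F_conj F P Q \<Longrightarrow> F_class F P = F_class F Q"
  unfolding F_class_def using F_conj_sym F_conj_trans by blast

lemma F_class_eq_iff: "subgroup P S \<Longrightarrow> F_class F P = F_class F Q \<longleftrightarrow> F_conj F P Q"
  unfolding F_class_def using F_conj_refl F_conj_sym F_conj_trans by blast

lemma F_class_subgroup: "Q \<in> F_class F P \<Longrightarrow> subgroup Q S"
  by (simp add: F_class_def F_conj_subgroup)

lemma Fmor_generate: "Fmor F P \<phi> \<Longrightarrow> a \<in> P \<Longrightarrow> Fmor F (generate S {a}) \<phi>"
  by (meson Fmor_restrict Fmor_subgroup generate_is_subgroup generate_subgroup_incl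
      empty_subsetI insert_subset subgroup.mem_carrier)

lemma Fmor_image_generate:
  assumes "Fmor F P \<phi>" and "a \<in> P"
  shows "\<phi> ` generate S {a} = generate S {\<phi> a}"
proof -
  have P: "subgroup P S" using assms(1) by (rule Fmor_subgroup)
  interpret \<phi>: group_hom "S\<lparr>carrier := P\<rparr>" S \<phi>
    using P Fmor_hom[OF assms(1)] by (simp add: group_hom_def group_hom_axioms_def subgroup_imp_group)
  have "generate S (\<phi> ` {a}) = \<phi> ` generate (S\<lparr>carrier := P\<rparr>) {a}"
    using assms(2) by (intro \<phi>.generate_img) simp
  also have "generate (S\<lparr>carrier := P\<rparr>) {a} = generate S {a}"
    using assms(2) P by (intro generate_consistent) auto
  finally show ?thesis by simp
qed

definition cyclic_class :: "'a \<Rightarrow> 'a set set" where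
  "cyclic_class a = F_class F (generate S {a})"

lemma cyclic_class_eq_iff_F_conj:
  "a \<in> carrier S \<Longrightarrow> cyclic_class a = F_class F Q \<longleftrightarrow> F_conj F (generate S {a}) Q"
  unfolding cyclic_class_def by (rule F_class_eq_iff) (simp add: generate_is_subgroup)

lemma cyclic_class_Fmor:
  assumes "Fmor F P \<phi>" and "a \<in> P"
  shows "cyclic_class (\<phi> a) = cyclic_class a"
proof -
  have "F_conj F (generate S {a}) (generate S {\<phi> a})"
    using Fmor_generate[OF assms] Fmor_image_generate[OF assms] by (auto simp: F_conj_def)
  then show ?thesis
    unfolding cyclic_class_def by (simp add: F_class_eq)
qed

lemma cyclic_class_coprime_nat_pow:
  "finite (carrier S) \<Longrightarrow> coprime k (order S) \<Longrightarrow> a \<in> carrier S \<Longrightarrow>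
    cyclic_class (a [^] (k::nat)) = cyclic_class a"
  by (simp add: cyclic_class_def generate_coprime_nat_pow)

end

section \<open>Fixed points of a biset\<close>

lemma card_fixpoints_conj:
  assumes "bij_betw f A A" and "g ` A \<subseteq> A" and conj: "\<And>x. x \<in> A \<Longrightarrow> f (g x) = h (f x)"
  shows "card {x\<in>A. g x = x} = card {y\<in>A. h y = y}"
proof -
  have inj: "inj_on f A" and onto: "f ` A = A"
    using assms(1) by (simp_all add: bij_betw_def)
  have image: "f ` {x\<in>A. g x = x} = {y\<in>A. h y = y}"
  proof (intro equalityI subsetI)
    fix y assume "y \<in> f ` {x\<in>A. g x = x}"
    then obtain x where "x \<in> A" "g x = x" "y = f x" by blast
    then show "y \<in> {y\<in>A. h y = y}" using onto conj[of x] by auto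
  next
    fix y assume y: "y \<in> {y\<in>A. h y = y}"
    then obtain x where x: "x \<in> A" "y = f x" using onto by auto
    then have "f (g x) = f x" using conj y by simp
    then have "g x = x" using inj x(1) assms(2) by (auto dest: inj_onD)
    then show "y \<in> f ` {x\<in>A. g x = x}" using x by auto
  qed
  have "inj_on f {x\<in>A. g x = x}" using inj by (rule inj_on_subset) auto
  then show ?thesis using card_image image by fastforce
qed

locale finite_biset = group S for S :: "('a, 'b) monoid_scheme" (structure) +
  fixes \<Omega> :: "'c set" and l :: "'a \<Rightarrow> 'c \<Rightarrow> 'c" and r :: "'c \<Rightarrow> 'a \<Rightarrow> 'c"
  assumes finite_carrier: "finite (carrier S)" and finite_\<Omega>: "finite \<Omega>"
    and biset: "biset S \<Omega> l r"
begin

lemma finite_subgroup: "subgroup P S \<Longrightarrow> finite P"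
  using finite_carrier subgroup.subset finite_subset by metis

abbreviation act :: "'a \<times> 'a \<Rightarrow> 'c \<Rightarrow> 'c" where
  "act \<equiv> act2 S l r"

lemma act_closed: "a \<in> carrier S \<Longrightarrow> b \<in> carrier S \<Longrightarrow> x \<in> \<Omega> \<Longrightarrow> act (a, b) x \<in> \<Omega>"
  using biset by (simp add: biset_def act2_def)

lemma act_one: "x \<in> \<Omega> \<Longrightarrow> act (\<one>, \<one>) x = x"
  using biset by (simp add: biset_def act2_def)

lemma act_mult:
  assumes "a \<in> carrier S" "b \<in> carrier S" "a' \<in> carrier S" "b' \<in> carrier S" "x \<in> \<Omega>"
  shows "act (a \<otimes> a', b \<otimes> b') x = act (a, b) (act (a', b') x)"
  using biset assms by (simp add: biset_def act2_def inv_mult_group)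

lemma act_inv_act:
  assumes "a \<in> carrier S" "b \<in> carrier S" "x \<in> \<Omega>"
  shows "act (inv a, inv b) (act (a, b) x) = x"
  using assms act_mult[of "inv a" "inv b" a b x] by (simp add: act_one)

lemma bij_betw_act: "a \<in> carrier S \<Longrightarrow> b \<in> carrier S \<Longrightarrow> bij_betw (act (a, b)) \<Omega> \<Omega>"
  using act_closed act_inv_act act_inv_act[of "inv a" "inv b"]
  by (intro bij_betw_byWitness[where f'="act (inv a, inv b)"]) auto

lemma group_action_act:
  assumes "subgroup H (S \<times>\<times> S)"
  shows "group_action ((S \<times>\<times> S)\<lparr>carrier := H\<rparr>) \<Omega> (\<lambda>g. restrict (act g) \<Omega>)"
proof -
  have H: "a \<in> carrier S" "b \<in> carrier S" if "(a, b) \<in> H" for a b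
    using subgroup.subset[OF assms] that by (auto simp: DirProd_def)
  have bij: "restrict (act g) \<Omega> \<in> Bij \<Omega>" if "g \<in> H" for g
    using that H bij_betw_act by (cases g) (simp add: Bij_def)
  have "restrict (act (g \<otimes>\<^bsub>S \<times>\<times> S\<^esub> h)) \<Omega>
      = restrict (act g) \<Omega> \<otimes>\<^bsub>BijGroup \<Omega>\<^esub> restrict (act h) \<Omega>" if "g \<in> H" "h \<in> H" for g h
    using bij[OF that(1)] bij[OF that(2)] that H
    by (cases g, cases h) (auto simp: BijGroup_def compose_def act_mult act_closed)
  then have "(\<lambda>g. restrict (act g) \<Omega>) \<in> hom ((S \<times>\<times> S)\<lparr>carrier := H\<rparr>) (BijGroup \<Omega>)"
    using bij by (intro homI) (auto simp: BijGroup_def)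
  moreover have "group ((S \<times>\<times> S)\<lparr>carrier := H\<rparr>)"
    using assms by (intro subgroup.subgroup_is_group DirProd_group is_group)
  ultimately show ?thesis
    using group_BijGroup by (simp add: group_action_def group_hom_def group_hom_axioms_def)
qed

definition Fix :: "'a \<Rightarrow> 'a \<Rightarrow> 'c set" where
  "Fix a b = {x \<in> \<Omega>. act (a, b) x = x}"

lemma Fix_subset_Fix_nat_pow:
  assumes "a \<in> carrier S" and "b \<in> carrier S"
  shows "Fix a b \<subseteq> Fix (a [^] (k::nat)) (b [^] k)"
proof
  fix x assume "x \<in> Fix a b"
  then have "x \<in> \<Omega>" and fixed: "act (a, b) x = x" by (auto simp: Fix_def)
  moreover have "act (a [^] k, b [^] k) x = x"
    by (induction k) (use assms fixed \<open>x \<in> \<Omega>\<close> in \<open>simp_all add: act_one act_mult\<close>)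
  ultimately show "x \<in> Fix (a [^] k) (b [^] k)" by (simp add: Fix_def)
qed

lemma Fix_coprime_nat_pow:
  assumes "a \<in> carrier S" and "b \<in> carrier S" and "coprime k (order S)"
  shows "Fix (a [^] (k::nat)) (b [^] k) = Fix a b"
proof
  obtain k' :: nat where k': "\<And>a. a \<in> carrier S \<Longrightarrow> (a [^] k) [^] k' = a"
    using coprime_nat_pow_inverse[OF finite_carrier assms(3)] by metis
  show "Fix (a [^] k) (b [^] k) \<subseteq> Fix a b"
    using Fix_subset_Fix_nat_pow[of "a [^] k" "b [^] k" k'] assms k' by simp
qed (rule Fix_subset_Fix_nat_pow[OF assms(1,2)])

text \<open>Burnside's lemma for P \<times> Q acting on the biset by (s, t) x = s x t\<inverse>.\<close>

lemma num_orbits_mult_card_eq_sum_card_Fix: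
  assumes P: "subgroup P S" and Q: "subgroup Q S"
  shows "num_orbits l r \<Omega> P Q * (card P * card Q) = (\<Sum>a\<in>P. \<Sum>b\<in>Q. card (Fix a b))"
proof -
  let ?G = "(S \<times>\<times> S)\<lparr>carrier := P \<times> Q\<rparr>" and ?\<phi> = "\<lambda>g. restrict (act g) \<Omega>"
  have PQ: "subgroup (P \<times> Q) (S \<times>\<times> S)"
    by (rule DirProd_subgroups[OF is_group P is_group Q])
  interpret group_action ?G \<Omega> ?\<phi>
    using PQ by (rule group_action_act)
  have finite: "finite (carrier ?G)"
    using finite_subgroup[OF P] finite_subgroup[OF Q] by simp
  have orbit_eq: "orbit ?G ?\<phi> x = {l s (r x t) | s t. s \<in> P \<and> t \<in> Q}" if "x \<in> \<Omega>" for x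
  proof -
    have "orbit ?G ?\<phi> x = (\<lambda>(s, t). l s (r x (inv t))) ` (P \<times> Q)"
      using that by (auto simp: orbit_def act2_def)
    also have "\<dots> = (\<lambda>(s, t). l s (r x t)) ` (P \<times> Q)"
      using Q subgroup.m_inv_closed[OF Q] subgroup.mem_carrier[OF Q]
      by (force simp: image_iff intro: rev_bexI[where x="inv _"])
    finally show ?thesis by auto
  qed
  have "orbits ?G \<Omega> ?\<phi> = {{l s (r x t) | s t. s \<in> P \<and> t \<in> Q} | x. x \<in> \<Omega>}"
    unfolding orbits_def setcompr_eq_image by (rule image_cong[OF refl]) (simp add: orbit_eq)
  moreover have "order ?G = card P * card Q"
    by (simp add: order_def card_cartesian_product)
  moreover have "invariants \<Omega> ?\<phi> g = Fix (fst g) (snd g)" for g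
    by (auto simp: invariants_def Fix_def)
  ultimately show ?thesis
    using burnside[OF finite finite_\<Omega>] by (simp add: num_orbits_def sum.cartesian_product split_def)
qed

definition fix_form :: "('a \<Rightarrow> rat) \<Rightarrow> ('a \<Rightarrow> rat) \<Rightarrow> rat" where
  "fix_form u v = (\<Sum>a\<in>carrier S. \<Sum>b\<in>carrier S. u a * v b * of_nat (card (Fix a b)))"

definition fix_row :: "'a \<Rightarrow> ('a \<Rightarrow> rat) \<Rightarrow> rat" where
  "fix_row a v = (\<Sum>b\<in>carrier S. v b * of_nat (card (Fix a b)))"

definition fix_col :: "('a \<Rightarrow> rat) \<Rightarrow> 'a \<Rightarrow> rat" where
  "fix_col u b = (\<Sum>a\<in>carrier S. u a * of_nat (card (Fix a b)))"

lemma fix_form_eq_sum_fix_row: "fix_form u v = (\<Sum>a\<in>carrier S. u a * fix_row a v)"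
  unfolding fix_form_def fix_row_def by (simp add: sum_distrib_left mult.assoc)

lemma fix_form_eq_sum_fix_col: "fix_form u v = (\<Sum>b\<in>carrier S. v b * fix_col u b)"
  unfolding fix_form_def fix_col_def
  by (subst sum.swap) (simp add: sum_distrib_left mult.assoc mult.left_commute)

lemma fix_form_sum_left: "fix_form (\<lambda>a. \<Sum>i\<in>I. c i * f i a) v = (\<Sum>i\<in>I. c i * fix_form (f i) v)"
  unfolding fix_form_eq_sum_fix_row sum_distrib_right sum_distrib_left mult.assoc
  by (rule sum.swap)

lemma fix_form_indicator:
  assumes "subgroup P S" and "subgroup Q S"
  shows "fix_form (indicator P) (indicator Q) = (\<Sum>a\<in>P. \<Sum>b\<in>Q. of_nat (card (Fix a b)))"
  using finite_carrier subgroup.subset[OF assms(1)] subgroup.subset[OF assms(2)]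
  by (simp add: fix_form_eq_sum_fix_row fix_row_def Int_absorb1)

lemma num_orbits_eq_fix_form:
  assumes "subgroup P S" and "subgroup Q S"
  shows "of_nat (num_orbits l r \<Omega> P Q)
    = fix_form (indicator P) (indicator Q) / (of_nat (card P) * of_nat (card Q))"
proof -
  have "0 < card P" and "0 < card Q"
    using assms finite_carrier by (simp_all add: subgroup.finite_imp_card_positive)
  then show ?thesis
    using arg_cong[OF num_orbits_mult_card_eq_sum_card_Fix[OF assms], of "of_nat :: nat \<Rightarrow> rat"]
    by (simp add: fix_form_indicator[OF assms] field_simps)
qed

definition power_invariant :: "('a \<Rightarrow> rat) \<Rightarrow> bool" where
  "power_invariant u \<longleftrightarrow> (\<forall>a\<in>carrier S. \<forall>k::nat. coprime k (order S) \<longrightarrow> u (a [^] k) = u a)"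

lemma power_invariant_indicator: "subgroup P S \<Longrightarrow> power_invariant (indicator P)"
  by (simp add: power_invariant_def indicator_def subgroup_coprime_nat_pow_iff finite_carrier)

lemma power_invariant_sum:
  "(\<And>i. i \<in> I \<Longrightarrow> power_invariant (f i)) \<Longrightarrow> power_invariant (\<lambda>a. \<Sum>i\<in>I. c i * f i a)"
  by (simp add: power_invariant_def)

text \<open>Fixed points are only invariant under simultaneous coprime powers, so the sum over b
  is reindexed by b \<mapsto> b^k.\<close>

lemma fix_row_coprime_nat_pow:
  assumes "power_invariant v" and "coprime k (order S)" and "a \<in> carrier S"
  shows "fix_row (a [^] (k::nat)) v = fix_row a v"
proof -
  have "fix_row (a [^] k) v = (\<Sum>b\<in>carrier S. v (b [^] k) * of_nat (card (Fix (a [^] k) (b [^] k))))"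
    unfolding fix_row_def
    using bij_betw_coprime_nat_pow[OF finite_carrier assms(2) subgroup_self]
    by (rule sum.reindex_bij_betw[symmetric])
  also have "\<dots> = fix_row a v"
    using assms by (simp add: fix_row_def power_invariant_def Fix_coprime_nat_pow)
  finally show ?thesis .
qed

lemma fix_col_coprime_nat_pow:
  assumes "power_invariant u" and "coprime k (order S)" and "b \<in> carrier S"
  shows "fix_col u (b [^] (k::nat)) = fix_col u b"
proof -
  have "fix_col u (b [^] k) = (\<Sum>a\<in>carrier S. u (a [^] k) * of_nat (card (Fix (a [^] k) (b [^] k))))"
    unfolding fix_col_def
    using bij_betw_coprime_nat_pow[OF finite_carrier assms(2) subgroup_self]
    by (rule sum.reindex_bij_betw[symmetric])
  also have "\<dots> = fix_col u b"
    using assms by (simp add: fix_col_def power_invariant_def Fix_coprime_nat_pow)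
  finally show ?thesis .
qed

definition isotropy_weight :: "('a \<Rightarrow> rat) \<Rightarrow> 'c \<Rightarrow> rat" where
  "isotropy_weight w x = (\<Sum>(a, b)\<in>isotropy S l r x. w a * w b)"

lemma fix_form_diag_eq_sum_isotropy_weight: "fix_form w w = (\<Sum>x\<in>\<Omega>. isotropy_weight w x)"
proof -
  have card_Fix: "of_nat (card (Fix a b)) = (\<Sum>x\<in>\<Omega>. if act (a, b) x = x then 1 else 0 :: rat)" for a b
    using sum.inter_filter[OF finite_\<Omega>, of "\<lambda>_. 1 :: rat"] by (simp add: Fix_def)
  have weight: "isotropy_weight w x
      = (\<Sum>a\<in>carrier S. \<Sum>b\<in>carrier S. if act (a, b) x = x then w a * w b else 0)" for x
  proof -
    have "isotropy_weight w x
        = (\<Sum>st\<in>carrier S \<times> carrier S. if act st x = x then w (fst st) * w (snd st) else 0)"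
      unfolding isotropy_weight_def isotropy_def split_def
      by (rule sum.inter_filter) (simp add: finite_carrier)
    then show ?thesis by (simp add: sum.cartesian_product split_def)
  qed
  have "fix_form w w = (\<Sum>a\<in>carrier S. \<Sum>b\<in>carrier S. \<Sum>x\<in>\<Omega>. if act (a, b) x = x then w a * w b else 0)"
    unfolding fix_form_def card_Fix by (simp add: sum_distrib_left if_distrib cong: if_cong)
  also have "\<dots> = (\<Sum>x\<in>\<Omega>. isotropy_weight w x)"
    unfolding weight by (subst sum.swap, subst (2) sum.swap) (rule refl)
  finally show ?thesis .
qed

end

section \<open>The rank of the orbit matrix\<close>

locale fusion_biset = fusion S F + finite_biset S \<Omega> l r
  for S :: "('a, 'b) monoid_scheme" (structure) and F and \<Omega> :: "'c set" and l r +
  fixes p :: nat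
  assumes prime: "Factorial_Ring.prime p" and p_group: "\<exists>n. card (carrier S) = p ^ n"
    and stable: "biset_stable S F \<Omega> l r" and generated: "biset_generated S F \<Omega> l r"
    and regular: "contains_regular_biset S \<Omega> l r"
begin

lemma card_Fix_Fmor:
  assumes a: "a \<in> carrier S" and b: "b \<in> carrier S"
    and \<phi>: "Fmor F (generate S {a}) \<phi>" and \<psi>: "Fmor F (generate S {b}) \<psi>"
  shows "card (Fix (\<phi> a) (\<psi> b)) = card (Fix a b)"
proof -
  let ?R = "generate S {a} \<times> generate S {b}"
  have "subgroup ?R (S \<times>\<times> S)"
    using a b by (intro DirProd_subgroups is_group generate_is_subgroup) auto
  moreover have "fst ` ?R = generate S {a}" and "snd ` ?R = generate S {b}"
    using generate.one[of S "{a}"] generate.one[of S "{b}"] by auto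
  ultimately obtain f where f: "bij_betw f \<Omega> \<Omega>"
    and equivariant: "\<And>st x. st \<in> ?R \<Longrightarrow> x \<in> \<Omega> \<Longrightarrow> f (act st x) = act (\<phi> (fst st), \<psi> (snd st)) (f x)"
    using stable \<phi> \<psi> unfolding biset_stable_def by metis
  have "(a, b) \<in> ?R"
    using a b by (auto intro: generate.incl)
  then have "card (Fix a b) = card (Fix (\<phi> a) (\<psi> b))"
    unfolding Fix_def
    by (intro card_fixpoints_conj[OF f]) (use act_closed[OF a b] equivariant in auto)
  then show ?thesis by simp
qed

lemma card_Fix_Fmor_left:
  "a \<in> carrier S \<Longrightarrow> b \<in> carrier S \<Longrightarrow> Fmor F (generate S {a}) \<phi> \<Longrightarrow>
    card (Fix (\<phi> a) b) = card (Fix a b)"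
  using card_Fix_Fmor[of a b \<phi> "conjg S \<one>"] by (simp add: Fmor_id generate_is_subgroup)

lemma card_Fix_Fmor_right:
  "a \<in> carrier S \<Longrightarrow> b \<in> carrier S \<Longrightarrow> Fmor F (generate S {b}) \<psi> \<Longrightarrow>
    card (Fix a (\<psi> b)) = card (Fix a b)"
  using card_Fix_Fmor[of a b "conjg S \<one>" \<psi>] by (simp add: Fmor_id generate_is_subgroup)

lemma cyclic_class_eq_obtains:
  assumes a: "a \<in> carrier S" and a': "a' \<in> carrier S" and eq: "cyclic_class a = cyclic_class a'"
  obtains \<phi> and k :: nat
  where "Fmor F (generate S {a}) \<phi>" and "coprime k (order S)" and "a' = \<phi> a [^] k"
proof -
  have "F_conj F (generate S {a}) (generate S {a'})"
    using eq a by (simp add: cyclic_class_def F_class_eq_iff generate_is_subgroup)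
  then obtain \<phi> where \<phi>: "Fmor F (generate S {a}) \<phi>" and "\<phi> ` generate S {a} = generate S {a'}"
    by (auto simp: F_conj_def)
  moreover have "a \<in> generate S {a}"
    using a by (simp add: generate.incl)
  ultimately have "generate S {\<phi> a} = generate S {a'}" and "\<phi> a \<in> carrier S"
    by (simp_all add: Fmor_image_generate Fmor_closed)
  then obtain k :: nat where "coprime k (order S)" and "a' = \<phi> a [^] k"
    using generate_eq_imp_coprime_nat_pow[OF prime finite_carrier _ _ a'] p_group
    unfolding order_def by metis
  with \<phi> that show ?thesis by blast
qed

lemma fix_row_cyclic_class_cong:
  assumes "power_invariant v" and a: "a \<in> carrier S" and "a' \<in> carrier S"
    and "cyclic_class a = cyclic_class a'"
  shows "fix_row a' v = fix_row a v"
proof -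
  obtain \<phi> and k :: nat
    where \<phi>: "Fmor F (generate S {a}) \<phi>" and "coprime k (order S)" and "a' = \<phi> a [^] k"
    using cyclic_class_eq_obtains assms(2-4) by blast
  moreover have "\<phi> a \<in> carrier S"
    using a by (auto intro: Fmor_closed[OF \<phi>] generate.incl)
  ultimately have "fix_row a' v = fix_row (\<phi> a) v"
    by (simp add: fix_row_coprime_nat_pow assms(1))
  also have "\<dots> = fix_row a v"
    unfolding fix_row_def using card_Fix_Fmor_left[OF a _ \<phi>] by simp
  finally show ?thesis .
qed

lemma fix_col_cyclic_class_cong:
  assumes "power_invariant u" and b: "b \<in> carrier S" and "b' \<in> carrier S"
    and "cyclic_class b = cyclic_class b'"
  shows "fix_col u b' = fix_col u b"
proof -
  obtain \<psi> and k :: nat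
    where \<psi>: "Fmor F (generate S {b}) \<psi>" and "coprime k (order S)" and "b' = \<psi> b [^] k"
    using cyclic_class_eq_obtains assms(2-4) by blast
  moreover have "\<psi> b \<in> carrier S"
    using b by (auto intro: Fmor_closed[OF \<psi>] generate.incl)
  ultimately have "fix_col u b' = fix_col u (\<psi> b)"
    by (simp add: fix_col_coprime_nat_pow assms(1))
  also have "\<dots> = fix_col u b"
    unfolding fix_col_def using card_Fix_Fmor_right[OF _ b \<psi>] by simp
  finally show ?thesis .
qed

definition class_function :: "('a \<Rightarrow> rat) \<Rightarrow> bool" where
  "class_function w \<longleftrightarrow>
    (\<forall>a\<in>carrier S. \<forall>a'\<in>carrier S. cyclic_class a = cyclic_class a' \<longrightarrow> w a = w a')"

lemma class_function_power_invariant: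
  assumes "class_function w"
  shows "power_invariant w"
  unfolding power_invariant_def
proof (intro ballI allI impI)
  fix a and k :: nat
  assume "a \<in> carrier S" and "coprime k (order S)"
  then have "cyclic_class (a [^] k) = cyclic_class a" and "a [^] k \<in> carrier S"
    by (simp_all add: cyclic_class_coprime_nat_pow finite_carrier)
  then show "w (a [^] k) = w a"
    using assms \<open>a \<in> carrier S\<close> unfolding class_function_def by blast
qed

text \<open>Isotropy groups are graphs of F-morphisms, which preserve cyclic classes.\<close>

lemma isotropy_weight_nonneg:
  assumes w: "class_function w" and x: "x \<in> \<Omega>"
  shows "0 \<le> isotropy_weight w x"
proof -
  obtain P \<phi> where \<phi>: "Fmor F P \<phi>" and iso: "isotropy S l r x = {(u, \<phi> u) | u. u \<in> P}"
    using generated x unfolding biset_generated_def by blast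
  have "w (\<phi> u) = w u" if "u \<in> P" for u
    using w that Fmor_closed[OF \<phi>] subgroup.mem_carrier[OF Fmor_subgroup[OF \<phi>]]
      cyclic_class_Fmor[OF \<phi>]
    by (simp add: class_function_def)
  then have "isotropy_weight w x = (\<Sum>u\<in>P. w u * w u)"
    unfolding isotropy_weight_def iso setcompr_eq_image
    by (subst sum.reindex) (auto simp: inj_on_def)
  then show ?thesis by (simp add: sum_nonneg)
qed

text \<open>The copy of S inside the biset is a point whose isotropy group is the diagonal.\<close>

lemma isotropy_weight_regular: "\<exists>x\<in>\<Omega>. isotropy_weight w x = (\<Sum>a\<in>carrier S. w a * w a)"
proof -
  obtain \<iota> where inj: "inj_on \<iota> (carrier S)" and into: "\<iota> ` carrier S \<subseteq> \<Omega>"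
    and equivariant: "\<And>s u t. s \<in> carrier S \<Longrightarrow> u \<in> carrier S \<Longrightarrow> t \<in> carrier S \<Longrightarrow>
      \<iota> (s \<otimes> u \<otimes> t) = l s (r (\<iota> u) t)"
    using regular unfolding contains_regular_biset_def by blast
  have "act (a, b) (\<iota> \<one>) = \<iota> (a \<otimes> inv b)" if "a \<in> carrier S" "b \<in> carrier S" for a b
    using equivariant[of a \<one> "inv b"] that by (simp add: act2_def)
  then have "act (a, b) (\<iota> \<one>) = \<iota> \<one> \<longleftrightarrow> a = b" if "a \<in> carrier S" "b \<in> carrier S" for a b
    using that inj inv_equality[of a "inv b"] by (auto simp: inj_on_eq_iff)
  then have diagonal: "isotropy S l r (\<iota> \<one>) = (\<lambda>a. (a, a)) ` carrier S"
    by (auto simp: isotropy_def)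
  have "isotropy_weight w (\<iota> \<one>) = (\<Sum>a\<in>carrier S. w a * w a)"
    unfolding isotropy_weight_def diagonal by (subst sum.reindex) (auto simp: inj_on_def)
  then show ?thesis using into by blast
qed

lemma sum_squares_le_fix_form:
  assumes "class_function w"
  shows "(\<Sum>a\<in>carrier S. w a * w a) \<le> fix_form w w"
proof -
  obtain x where "x \<in> \<Omega>" and "isotropy_weight w x = (\<Sum>a\<in>carrier S. w a * w a)"
    using isotropy_weight_regular by blast
  moreover have "isotropy_weight w x \<le> (\<Sum>x\<in>\<Omega>. isotropy_weight w x)"
    using \<open>x \<in> \<Omega>\<close> isotropy_weight_nonneg[OF assms] finite_\<Omega> by (intro member_le_sum) auto
  ultimately show ?thesis
    by (simp add: fix_form_diag_eq_sum_isotropy_weight)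
qed

lemma class_function_eq_0:
  assumes "class_function w" and "fix_form w w = 0" and "a \<in> carrier S"
  shows "w a = 0"
proof -
  have "(\<Sum>a\<in>carrier S. w a * w a) = 0"
    using sum_squares_le_fix_form[OF assms(1)] assms(2) sum_nonneg[of "carrier S" "\<lambda>a. w a * w a"]
    by simp
  then show ?thesis
    using assms(3) finite_carrier by (simp add: sum_nonneg_eq_0_iff)
qed

definition cyclic_classes :: "'a set set set" where
  "cyclic_classes = cyclic_class ` carrier S"

definition class_elems :: "'a set set \<Rightarrow> 'a set" where
  "class_elems c = {a \<in> carrier S. cyclic_class a = c}"

definition class_sum :: "('a \<Rightarrow> rat) \<Rightarrow> 'a set set \<Rightarrow> rat" where
  "class_sum u c = (\<Sum>a\<in>class_elems c. u a)"

definition class_gen :: "'a set set \<Rightarrow> 'a" where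
  "class_gen c = (SOME a. a \<in> class_elems c)"

lemma finite_cyclic_classes: "finite cyclic_classes"
  using finite_carrier by (simp add: cyclic_classes_def)

lemma finite_class_elems: "finite (class_elems c)"
  using finite_carrier by (simp add: class_elems_def)

lemma class_gen_in_class_elems: "c \<in> cyclic_classes \<Longrightarrow> class_gen c \<in> class_elems c"
  unfolding class_gen_def by (rule someI_ex) (auto simp: cyclic_classes_def class_elems_def)

lemma class_gen_carrier: "c \<in> cyclic_classes \<Longrightarrow> class_gen c \<in> carrier S"
  and cyclic_class_class_gen: "c \<in> cyclic_classes \<Longrightarrow> cyclic_class (class_gen c) = c"
  using class_gen_in_class_elems by (simp_all add: class_elems_def)

lemma sum_carrier_eq_sum_class_sum: "(\<Sum>a\<in>carrier S. u a) = (\<Sum>c\<in>cyclic_classes. class_sum u c)"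
  unfolding class_sum_def class_elems_def cyclic_classes_def
  by (rule sum.group[symmetric]) (use finite_carrier in auto)

lemma fix_form_eq_sum_class_sum_left:
  assumes "power_invariant v"
  shows "fix_form u v = (\<Sum>c\<in>cyclic_classes. class_sum u c * fix_row (class_gen c) v)"
proof -
  have "fix_row a v = fix_row (class_gen c) v" if "c \<in> cyclic_classes" "a \<in> class_elems c" for c a
    using fix_row_cyclic_class_cong[OF assms] that class_gen_in_class_elems[OF that(1)]
    by (simp add: class_elems_def)
  then show ?thesis
    unfolding fix_form_eq_sum_fix_row sum_carrier_eq_sum_class_sum class_sum_def sum_distrib_right
    by (intro sum.cong) auto
qed

lemma fix_form_eq_sum_class_sum_right:
  assumes "power_invariant u"
  shows "fix_form u v = (\<Sum>c\<in>cyclic_classes. class_sum v c * fix_col u (class_gen c))"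
proof -
  have "fix_col u b = fix_col u (class_gen c)" if "c \<in> cyclic_classes" "b \<in> class_elems c" for c b
    using fix_col_cyclic_class_cong[OF assms] that class_gen_in_class_elems[OF that(1)]
    by (simp add: class_elems_def)
  then show ?thesis
    unfolding fix_form_eq_sum_fix_col sum_carrier_eq_sum_class_sum class_sum_def sum_distrib_right
    by (intro sum.cong) auto
qed

definition class_rep :: "'a set set \<Rightarrow> 'a set" where
  "class_rep A = (SOME P. P \<in> A)"

lemma
  assumes "A \<in> F_classes S F"
  shows class_rep_subgroup: "subgroup (class_rep A) S"
    and F_class_class_rep: "F_class F (class_rep A) = A"
proof -
  obtain P where P: "subgroup P S" and A: "F_class F P = A"
    using assms unfolding F_classes_def by blast
  have "class_rep A \<in> F_class F P"
    unfolding class_rep_def A[symmetric]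
    by (rule someI[of _ P]) (simp add: P F_class_def F_conj_refl)
  then have "F_conj F P (class_rep A)"
    by (simp add: F_class_def)
  then show "subgroup (class_rep A) S" and "F_class F (class_rep A) = A"
    using F_conj_subgroup F_class_eq A by auto
qed

lemma finite_F_classes: "finite (F_classes S F)"
proof (rule finite_subset)
  show "F_classes S F \<subseteq> Pow (Pow (carrier S))"
    by (auto simp: F_classes_def dest!: F_class_subgroup subgroup.subset)
qed (simp add: finite_carrier)

lemma F_cyclic_classes_eq: "F_cyclic_classes S F = cyclic_classes"
  by (auto simp: F_cyclic_classes_def cyclic_classes_def cyclic_class_def cyclic_subgroup_def
      generate_is_subgroup)

lemma cyclic_classes_subset: "cyclic_classes \<subseteq> F_classes S F"
  by (auto simp: F_classes_def cyclic_classes_def cyclic_class_def generate_is_subgroup)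

lemma orbit_matrix_eq:
  assumes "A \<in> F_classes S F" and "B \<in> F_classes S F"
  shows "orbit_matrix l r \<Omega> A B = fix_form (indicator (class_rep A)) (indicator (class_rep B))
    / (of_nat (card (class_rep A)) * of_nat (card (class_rep B)))"
  unfolding orbit_matrix_def class_rep_def[symmetric]
  by (rule num_orbits_eq_fix_form[OF class_rep_subgroup[OF assms(1)] class_rep_subgroup[OF assms(2)]])

lemma card_class_rep_pos: "A \<in> F_classes S F \<Longrightarrow> 0 < card (class_rep A)"
  using class_rep_subgroup finite_carrier subgroup.finite_imp_card_positive by blast

lemma class_sum_indicator: "class_sum (indicator P) c = of_nat (card (class_elems c \<inter> P))"
  using sum_indicator_mult[OF finite_class_elems, of P "\<lambda>_. 1 :: rat"] by (simp add: class_sum_def)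

lemma class_sum_indicator_class_rep_triangular:
  assumes c: "c \<in> cyclic_classes" and c': "c' \<in> cyclic_classes"
    and "class_sum (indicator (class_rep c')) c \<noteq> 0"
  shows "c = c' \<or> card (class_rep c) < card (class_rep c')"
proof -
  have "class_elems c \<inter> class_rep c' \<noteq> {}"
    using assms(3) by (auto simp: class_sum_indicator)
  then obtain b where b: "b \<in> carrier S" "cyclic_class b = c" "b \<in> class_rep c'"
    by (auto simp: class_elems_def)
  have rep: "subgroup (class_rep c') S" "F_class F (class_rep c) = c" "F_class F (class_rep c') = c'"
    using c c' cyclic_classes_subset class_rep_subgroup F_class_class_rep by auto
  have sub: "generate S {b} \<subseteq> class_rep c'"
    using b(3) rep(1) by (intro generate_subgroup_incl) auto
  have "F_conj F (generate S {b}) (class_rep c)"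
    using b(2) rep(2) cyclic_class_eq_iff_F_conj[OF b(1), of "class_rep c"] by simp
  then have card_eq: "card (generate S {b}) = card (class_rep c)"
    by (rule F_conj_card_eq)
  have "finite (class_rep c')"
    using rep(1) by (rule finite_subgroup)
  then have "card (class_rep c) \<le> card (class_rep c')"
    and "card (class_rep c) = card (class_rep c') \<Longrightarrow> generate S {b} = class_rep c'"
    using card_mono[OF _ sub] card_subset_eq[OF _ sub] card_eq by simp_all
  moreover have "c = c'" if "generate S {b} = class_rep c'"
    using b(2) rep(3) that by (simp add: cyclic_class_def)
  ultimately show ?thesis by linarith
qed

lemma class_sum_indicator_class_rep_diagonal:
  assumes c: "c \<in> cyclic_classes"
  shows "class_sum (indicator (class_rep c)) c \<noteq> 0"
proof -
  obtain a where a: "a \<in> carrier S" and "c = cyclic_class a"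
    using c by (auto simp: cyclic_classes_def)
  then have "F_conj F (generate S {a}) (class_rep c)"
    using F_class_class_rep[of c] c cyclic_classes_subset cyclic_class_eq_iff_F_conj[OF a, of "class_rep c"] by auto
  then obtain \<phi> where \<phi>: "Fmor F (generate S {a}) \<phi>" and "\<phi> ` generate S {a} = class_rep c"
    by (auto simp: F_conj_def)
  moreover have a_gen: "a \<in> generate S {a}"
    using a by (simp add: generate.incl)
  ultimately have "\<phi> a \<in> class_rep c" and "\<phi> a \<in> carrier S"
    and "cyclic_class (\<phi> a) = c"
    using Fmor_closed[OF \<phi> a_gen] cyclic_class_Fmor[OF \<phi> a_gen] \<open>c = cyclic_class a\<close> by auto
  then have "class_elems c \<inter> class_rep c \<noteq> {}"
    by (auto simp: class_elems_def)
  then show ?thesis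
    by (simp add: class_sum_indicator finite_class_elems)
qed

lemma mat_rank_orbit_matrix_le:
  "mat_rank (F_classes S F) (F_classes S F) (orbit_matrix l r \<Omega>) \<le> card cyclic_classes"
proof (rule mat_rank_le_factorization[OF finite_F_classes finite_cyclic_classes])
  fix A B assume A: "A \<in> F_classes S F" and B: "B \<in> F_classes S F"
  let ?P = "class_rep A" and ?Q = "class_rep B"
  have "orbit_matrix l r \<Omega> A B = (\<Sum>c\<in>cyclic_classes.
      class_sum (indicator ?P) c * fix_row (class_gen c) (indicator ?Q))
      / (of_nat (card ?P) * of_nat (card ?Q))"
    unfolding orbit_matrix_eq[OF A B]
    by (simp add: fix_form_eq_sum_class_sum_left power_invariant_indicator class_rep_subgroup B)
  then show "orbit_matrix l r \<Omega> A B = (\<Sum>c\<in>cyclic_classes.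
      class_sum (indicator ?P) c / of_nat (card ?P) * (fix_row (class_gen c) (indicator ?Q) / of_nat (card ?Q)))"
    by (simp add: sum_divide_distrib)
qed

lemma fix_col_eq_0:
  assumes u: "power_invariant u"
    and orth: "\<And>c. c \<in> cyclic_classes \<Longrightarrow> fix_form u (indicator (class_rep c)) = 0"
    and b: "b \<in> carrier S"
  shows "fix_col u b = 0"
proof -
  have "\<forall>c\<in>cyclic_classes. fix_col u (class_gen c) = 0"
  proof (rule triangular_system_solution_eq_0[OF finite_cyclic_classes,
        where n = "\<lambda>c c'. class_sum (indicator (class_rep c)) c'" and \<kappa> = "\<lambda>c. card (class_rep c)"])
    fix c c' assume "c \<in> cyclic_classes" "c' \<in> cyclic_classes"
      "class_sum (indicator (class_rep c)) c' \<noteq> 0"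
    then show "c' = c \<or> card (class_rep c') < card (class_rep c)"
      using class_sum_indicator_class_rep_triangular[of c' c] by blast
  next
    fix c assume c: "c \<in> cyclic_classes"
    then show "class_sum (indicator (class_rep c)) c \<noteq> 0"
      by (rule class_sum_indicator_class_rep_diagonal)
    show "(\<Sum>c'\<in>cyclic_classes. class_sum (indicator (class_rep c)) c' * fix_col u (class_gen c')) = 0"
      using orth[OF c] by (simp add: fix_form_eq_sum_class_sum_right[OF u])
  qed
  moreover have "cyclic_class b \<in> cyclic_classes"
    using b by (simp add: cyclic_classes_def)
  ultimately show ?thesis
    using fix_col_cyclic_class_cong[OF u class_gen_carrier b] cyclic_class_class_gen by simp
qed

text \<open>Averaging u over the cyclic classes gives a class function w with the same class sums,
  so the form vanishes on (w, w); positivity then forces w = 0.\<close>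

lemma class_sum_eq_0:
  assumes col: "\<And>b. b \<in> carrier S \<Longrightarrow> fix_col u b = 0" and c: "c \<in> cyclic_classes"
  shows "class_sum u c = 0"
proof -
  define w where "w a = class_sum u (cyclic_class a) / of_nat (card (class_elems (cyclic_class a)))" for a
  have w: "class_function w"
    by (simp add: class_function_def w_def)
  have card_pos: "card (class_elems c) \<noteq> 0" if "c \<in> cyclic_classes" for c
    using class_gen_in_class_elems[OF that] finite_class_elems by auto
  have class_sum_w: "class_sum w c = class_sum u c" if "c \<in> cyclic_classes" for c
    using card_pos[OF that] by (simp add: class_sum_def w_def class_elems_def)
  have "fix_form w w = (\<Sum>c\<in>cyclic_classes. class_sum w c * fix_row (class_gen c) w)"
    by (rule fix_form_eq_sum_class_sum_left[OF class_function_power_invariant[OF w]])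
  also have "\<dots> = (\<Sum>c\<in>cyclic_classes. class_sum u c * fix_row (class_gen c) w)"
    by (simp add: class_sum_w)
  also have "\<dots> = fix_form u w"
    by (rule fix_form_eq_sum_class_sum_left[OF class_function_power_invariant[OF w], symmetric])
  also have "\<dots> = 0"
    using col by (simp add: fix_form_eq_sum_fix_col)
  finally have "w (class_gen c) = 0"
    using class_function_eq_0[OF w] class_gen_carrier[OF c] by blast
  then show ?thesis
    using card_pos[OF c] by (simp add: w_def cyclic_class_class_gen[OF c])
qed

lemma cyclic_rows_lin_indep: "rows_lin_indep cyclic_classes (F_classes S F) (orbit_matrix l r \<Omega>)"
  unfolding rows_lin_indep_def
proof (intro allI impI)
  fix x assume rel: "\<forall>B\<in>F_classes S F. (\<Sum>A\<in>cyclic_classes. x A * orbit_matrix l r \<Omega> A B) = 0"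
  have classes: "\<And>A. A \<in> cyclic_classes \<Longrightarrow> A \<in> F_classes S F"
    using cyclic_classes_subset by blast
  define y where "y A = x A / of_nat (card (class_rep A))" for A
  define u where "u a = (\<Sum>A\<in>cyclic_classes. y A * indicator (class_rep A) a)" for a
  have u: "power_invariant u"
    unfolding u_def by (intro power_invariant_sum power_invariant_indicator class_rep_subgroup classes)
  have "fix_form u (indicator (class_rep B)) = 0" if B: "B \<in> cyclic_classes" for B
  proof -
    have "fix_form u (indicator (class_rep B))
        = (\<Sum>A\<in>cyclic_classes. y A * fix_form (indicator (class_rep A)) (indicator (class_rep B)))"
      unfolding u_def[abs_def] by (rule fix_form_sum_left)
    also have "\<dots> = of_nat (card (class_rep B)) * (\<Sum>A\<in>cyclic_classes. x A * orbit_matrix l r \<Omega> A B)"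
      unfolding sum_distrib_left
      using card_class_rep_pos[OF classes] classes B
      by (intro sum.cong) (simp_all add: y_def orbit_matrix_eq)
    also have "\<dots> = 0"
      using rel classes[OF B] by simp
    finally show ?thesis .
  qed
  then have class_sums: "class_sum u c = 0" if "c \<in> cyclic_classes" for c
    using that by (intro class_sum_eq_0 fix_col_eq_0[OF u])
  have "\<forall>A\<in>cyclic_classes. y A = 0"
  proof (rule triangular_system_solution_eq_0[OF finite_cyclic_classes,
        where n = "\<lambda>c A. class_sum (indicator (class_rep A)) c"
        and \<kappa> = "\<lambda>c. - int (card (class_rep c))"])
    fix c A assume "c \<in> cyclic_classes" "A \<in> cyclic_classes"
      "class_sum (indicator (class_rep A)) c \<noteq> 0"
    then show "A = c \<or> - int (card (class_rep A)) < - int (card (class_rep c))"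
      using class_sum_indicator_class_rep_triangular by auto
  next
    fix c assume c: "c \<in> cyclic_classes"
    then show "class_sum (indicator (class_rep c)) c \<noteq> 0"
      by (rule class_sum_indicator_class_rep_diagonal)
    have "class_sum u c = (\<Sum>A\<in>cyclic_classes. class_sum (indicator (class_rep A)) c * y A)"
      unfolding u_def class_sum_def by (subst sum.swap) (simp add: sum_distrib_left mult.commute)
    then show "(\<Sum>A\<in>cyclic_classes. class_sum (indicator (class_rep A)) c * y A) = 0"
      using class_sums[OF c] by simp
  qed
  then show "\<forall>A\<in>cyclic_classes. x A = 0"
    using card_class_rep_pos[OF classes] by (fastforce simp: y_def)
qed

end

theorem proposition3p1:
  fixes p :: nat and S :: "('a, 'b) monoid_scheme"
    and F :: "('a set \<times> ('a \<Rightarrow> 'a)) set"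
    and \<Omega> :: "'c set" and l :: "'a \<Rightarrow> 'c \<Rightarrow> 'c" and r :: "'c \<Rightarrow> 'a \<Rightarrow> 'c"
  assumes "Factorial_Ring.prime p"
    and "group S" and "finite (carrier S)" and "\<exists>n. card (carrier S) = p ^ n"
    and "saturated_fusion_system p S F"
    and "finite \<Omega>" and "biset S \<Omega> l r"
    and "biset_stable S F \<Omega> l r" and "biset_generated S F \<Omega> l r"
    and "contains_regular_biset S \<Omega> l r"
  shows "mat_rank (F_classes S F) (F_classes S F) (orbit_matrix l r \<Omega>)
           = card (F_cyclic_classes S F)"
proof -
  have "fusion_system S F"
    using assms(5) by (simp add: saturated_fusion_system_def)
  then interpret fusion_biset S F \<Omega> l r p
    using assms by (simp add: fusion_biset_def fusion_def fusion_axioms_def finite_biset_def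
        finite_biset_axioms_def fusion_biset_axioms_def)
  have "mat_rank (F_classes S F) (F_classes S F) (orbit_matrix l r \<Omega>) \<le> card cyclic_classes"
    by (rule mat_rank_orbit_matrix_le)
  moreover have "card cyclic_classes \<le> mat_rank (F_classes S F) (F_classes S F) (orbit_matrix l r \<Omega>)"
    by (rule card_le_mat_rank[OF finite_F_classes cyclic_classes_subset cyclic_rows_lin_indep])
  ultimately show ?thesis
    by (simp add: F_cyclic_classes_eq)
qed

end
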